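(* In the setting of error-feedback sparsification below, with $O_k\in(0,1)$, define $m_k^{t+1}=m_{B,k}^{t+1}m_{A,k}^{t+1}\in\mathbb{R}^{d\times\ell}$. Then for every $t\ge0$, $$\mathbb{E}\left[\left\|m_k^{t+1}\right\|_F\right] \leq \frac{2(1-O_k)}{O_k^2}\max_{0\leq i \leq t}\|\Delta\tilde{\theta}_k^i\|_F^2.$$
   Context: Setting: LoRA factors $\theta_B\in\mathbb{R}^{d\times r}$, $\theta_A\in\mathbb{R}^{r\times\ell}$. Let $q=r(d+\ell)$ and let $\mathcal{S}:\mathbb{R}^{q}\to\mathbb{R}^{q}$ be a (possibly random) sparsification operator keeping $u=O_kq$ nonzero entries ($0<u<q$) with $\mathbb{E}\|\mathcal{S}(x)-x\|_2^2\le(1-u/q)\|x\|_2^2$ for all $x$. Client $k$ has memories $m_{B,k}^t\in\mathbb{R}^{d\times r}$, $m_{A,k}^t\in\mathbb{R}^{r\times\ell}$ and concatenations $\tilde m_k^t=[m_{B,k}^{t\mathsf T}\ m_{A,k}^t]$, $\Delta\tilde\theta_k^t=[\Delta\theta_{B,k}^{t\mathsf T}\ \Delta\theta_{A,k}^t]$, $\tilde\theta_k^t=[\theta_{B,k}^{t\mathsf T}\ \theta_{A,k}^t]$ (identified with vectors in $\mathbb{R}^q$), where $\Delta\theta_{B,k}^t,\Delta\theta_{A,k}^t$ are the locally trained factors (trained with a near-orthogonality regularized loss), $\tilde\theta_k^t=\mathcal{S}(\tilde m_k^t+\Delta\tilde\theta_k^t)$, $\tilde m_k^{t+1}=\tilde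 m_k^t+\Delta\tilde\theta_k^t-\tilde\theta_k^t$, and $\tilde m_k^0=0$. Expectation is over the randomness of $\mathcal{S}$. *)

theory Defs
  imports "HOL-Probability.Probability"
begin

text \<open>Concatenated LoRA parameter space R^q, q = r(d+l): a vector indexed by
  'r \<times> ('d + 'l), i.e. the r \<times> (d+l) matrix [B^T  A].
  Entry (i, Inl j) is B(j,i) and entry (i, Inr j) is A(i,j).\<close>

definition concat_lora :: "real^'r::finite^'d::finite \<Rightarrow> real^'l::finite^'r \<Rightarrow> real^('r \<times> ('d + 'l))" where
  "concat_lora B A = (\<chi> p. case p of (i, Inl j) \<Rightarrow> B $ j $ i | (i, Inr j) \<Rightarrow> A $ i $ j)"

definition factor_B :: "real^('r::finite \<times> ('d::finite + 'l::finite)) \<Rightarrow> real^'r^'d" where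
  "factor_B v = (\<chi> j i. v $ (i, Inl j))"

definition factor_A :: "real^('r::finite \<times> ('d::finite + 'l::finite)) \<Rightarrow> real^'l^'r" where
  "factor_A v = (\<chi> i j. v $ (i, Inr j))"

definition keeps_entries :: "nat \<Rightarrow> real^'n::finite \<Rightarrow> real^'n \<Rightarrow> bool" where
  "keeps_entries u x y \<longleftrightarrow> (\<exists>I. card I = u \<and> (\<forall>i. y $ i = (if i \<in> I then x $ i else 0)))"

fun ef_memory :: "(real^'n::finite \<Rightarrow> (real^'n) pmf) \<Rightarrow> (nat \<Rightarrow> real^'n) \<Rightarrow> nat \<Rightarrow> (real^'n) pmf" where
  "ef_memory S D 0 = return_pmf 0"
| "ef_memory S D (Suc t) =
     bind_pmf (ef_memory S D t) (\<lambda>m. map_pmf (\<lambda>s. m + D t - s) (S (m + D t)))"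

end

theory Submission
  imports Defs
begin

text \<open>The Frobenius norm is submultiplicative, so by AM-GM the product of the two factors of
  a concatenated vector v has norm at most |v|^2/2 and it suffices to bound the second
  moment E_t of the memory. Contractivity of the sparsifier together with
  |m + D|^2 \<le> (1 + e)|m|^2 + (1 + 1/e)|D|^2 for e = \<delta>/(2(1 - \<delta>)) gives the linear recursion
  E_{t+1} \<le> (1 - \<delta>/2) E_t + (1 - \<delta>)(2 - \<delta>)/\<delta> M with M = max_i |D_i|^2, whose fixed point
  2(1 - \<delta>)(2 - \<delta>)M/\<delta>^2 bounds every E_t since E_0 = 0.\<close>

lemma norm_power2_vec: "(norm (x::'a::real_inner^'n::finite))\<^sup>2 = (\<Sum>i\<in>UNIV. (norm (x $ i))\<^sup>2)"
  by (simp add: power2_norm_eq_inner inner_vec_def)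

lemma norm_matrix_matrix_mult_le:
  fixes B :: "real^'r::finite^'d::finite" and A :: "real^'l::finite^'r"
  shows "norm (B ** A) \<le> norm B * norm A"
proof -
  have "(norm (B ** A))\<^sup>2 = (\<Sum>j\<in>UNIV. \<Sum>k\<in>UNIV. (\<Sum>i\<in>UNIV. B $ j $ i * A $ i $ k)\<^sup>2)"
    by (simp add: norm_power2_vec matrix_matrix_mult_def)
  also have "\<dots> \<le> (\<Sum>j\<in>UNIV. \<Sum>k\<in>UNIV. (\<Sum>i\<in>UNIV. (B $ j $ i)\<^sup>2) * (\<Sum>i\<in>UNIV. (A $ i $ k)\<^sup>2))"
    by (intro sum_mono Cauchy_Schwarz_ineq_sum)
  also have "\<dots> = (\<Sum>j\<in>UNIV. \<Sum>i\<in>UNIV. (B $ j $ i)\<^sup>2) * (\<Sum>k\<in>UNIV. \<Sum>i\<in>UNIV. (A $ i $ k)\<^sup>2)"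
    by (rule sum_product[symmetric])
  also have "(\<Sum>k\<in>UNIV. \<Sum>i\<in>UNIV. (A $ i $ k)\<^sup>2) = (\<Sum>i\<in>UNIV. \<Sum>k\<in>UNIV. (A $ i $ k)\<^sup>2)"
    by (rule sum.swap)
  finally have "(norm (B ** A))\<^sup>2 \<le> (norm B * norm A)\<^sup>2"
    by (simp add: norm_power2_vec power_mult_distrib)
  then show ?thesis
    by (rule power2_le_imp_le) simp
qed

lemma norm_factor_B_factor_A:
  fixes v :: "real^('r::finite \<times> ('d::finite + 'l::finite))"
  shows "(norm (factor_B v))\<^sup>2 + (norm (factor_A v))\<^sup>2 = (norm v)\<^sup>2"
proof -
  have row: "(\<Sum>s\<in>UNIV. (v $ (i, s))\<^sup>2) = (\<Sum>j\<in>UNIV. (v $ (i, Inl j))\<^sup>2) + (\<Sum>j\<in>UNIV. (v $ (i, Inr j))\<^sup>2)"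
    for i
    using sum.Plus[of "UNIV :: 'd set" "UNIV :: 'l set" "\<lambda>s. (v $ (i, s))\<^sup>2"]
    by (simp add: UNIV_Plus_UNIV o_def)
  have "(norm v)\<^sup>2 = (\<Sum>i\<in>UNIV. \<Sum>s\<in>UNIV. (v $ (i, s))\<^sup>2)"
    by (simp add: norm_power2_vec sum.cartesian_product)
  also have "\<dots> = (\<Sum>i\<in>UNIV. \<Sum>j\<in>UNIV. (v $ (i, Inl j))\<^sup>2) + (\<Sum>i\<in>UNIV. \<Sum>j\<in>UNIV. (v $ (i, Inr j))\<^sup>2)"
    by (simp add: row sum.distrib)
  also have "(\<Sum>i\<in>UNIV. \<Sum>j\<in>UNIV. (v $ (i, Inl j))\<^sup>2) = (\<Sum>j\<in>UNIV. \<Sum>i\<in>UNIV. (v $ (i, Inl j))\<^sup>2)"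
    by (rule sum.swap)
  finally show ?thesis
    by (simp add: norm_power2_vec factor_B_def factor_A_def)
qed

lemma norm_factor_product_le:
  fixes v :: "real^('r::finite \<times> ('d::finite + 'l::finite))"
  shows "norm (factor_B v ** factor_A v) \<le> (norm v)\<^sup>2 / 2"
proof -
  have "norm (factor_B v ** factor_A v) \<le> norm (factor_B v) * norm (factor_A v)"
    by (rule norm_matrix_matrix_mult_le)
  also have "\<dots> \<le> ((norm (factor_B v))\<^sup>2 + (norm (factor_A v))\<^sup>2) / 2"
    using sum_squares_bound[of "norm (factor_B v)" "norm (factor_A v)"] by simp
  finally show ?thesis
    by (simp add: norm_factor_B_factor_A)
qed

lemma finite_set_pmf_keeps_entries:
  assumes "\<And>y. y \<in> set_pmf p \<Longrightarrow> keeps_entries u (x::real^'n::finite) y"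
  shows "finite (set_pmf p)"
proof (rule finite_subset)
  show "set_pmf p \<subseteq> range (\<lambda>I. \<chi> i. if i \<in> I then x $ i else 0)"
  proof
    fix y assume "y \<in> set_pmf p"
    then obtain I where "\<forall>i. y $ i = (if i \<in> I then x $ i else 0)"
      using assms unfolding keeps_entries_def by blast
    then have "y = (\<chi> i. if i \<in> I then x $ i else 0)"
      by (simp add: vec_eq_iff)
    then show "y \<in> range (\<lambda>I. \<chi> i. if i \<in> I then x $ i else 0)"
      by blast
  qed
qed simp

lemma finite_set_pmf_ef_memory:
  assumes "\<And>x. finite (set_pmf (S x))"
  shows "finite (set_pmf (ef_memory S D n))"
  by (induction n) (simp_all add: set_bind_pmf assms)

lemma expectation_bind_pmf_finite:
  fixes h :: "'b \<Rightarrow> 'c::{banach, second_countable_topology}"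
  assumes "finite (set_pmf p)" and "\<And>x. x \<in> set_pmf p \<Longrightarrow> finite (set_pmf (N x))"
  shows "measure_pmf.expectation (bind_pmf p N) h
       = measure_pmf.expectation p (\<lambda>x. measure_pmf.expectation (N x) h)"
  using assms by (simp add: pmf_expectation_bind[of "set_pmf p"] integral_measure_pmf[of "set_pmf p"])

lemma norm_add_power2_le:
  fixes a b :: "'a::real_normed_vector" and e :: real
  assumes "0 < e"
  shows "(norm (a + b))\<^sup>2 \<le> (1 + e) * (norm a)\<^sup>2 + (1 + 1 / e) * (norm b)\<^sup>2"
proof -
  have "2 * norm a * norm b \<le> e * (norm a)\<^sup>2 + (norm b)\<^sup>2 / e"
  proof -
    have "0 \<le> (e * norm a - norm b)\<^sup>2 / e"
      using assms by simp
    also have "\<dots> = e * (norm a)\<^sup>2 - 2 * norm a * norm b + (norm b)\<^sup>2 / e"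
      using assms by (simp add: power2_eq_square field_simps)
    finally show ?thesis by simp
  qed
  moreover have "(norm (a + b))\<^sup>2 \<le> (norm a + norm b)\<^sup>2"
    by (simp add: norm_triangle_ineq power_mono)
  ultimately show ?thesis
    by (simp add: power2_sum algebra_simps)
qed

lemma ef_memory_expectation_step:
  fixes S :: "real^'n::finite \<Rightarrow> (real^'n) pmf"
  assumes finite_S: "\<And>x. finite (set_pmf (S x))"
    and contr: "\<And>x. measure_pmf.expectation (S x) (\<lambda>y. (norm (y - x))\<^sup>2) \<le> (1 - \<delta>) * (norm x)\<^sup>2"
    and "\<delta> \<le> 1" and "0 < e"
  shows "measure_pmf.expectation (ef_memory S D (Suc n)) (\<lambda>m. (norm m)\<^sup>2)
       \<le> (1 - \<delta>) * (1 + e) * measure_pmf.expectation (ef_memory S D n) (\<lambda>m. (norm m)\<^sup>2)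
         + (1 - \<delta>) * (1 + 1 / e) * (norm (D n))\<^sup>2"
proof -
  let ?p = "ef_memory S D n"
  have finite_p: "finite (set_pmf ?p)"
    using finite_S by (rule finite_set_pmf_ef_memory)
  have inner: "measure_pmf.expectation (map_pmf (\<lambda>s. m + D n - s) (S (m + D n))) (\<lambda>m. (norm m)\<^sup>2)
      \<le> (1 - \<delta>) * (1 + e) * (norm m)\<^sup>2 + (1 - \<delta>) * (1 + 1 / e) * (norm (D n))\<^sup>2" for m
  proof -
    have "measure_pmf.expectation (map_pmf (\<lambda>s. m + D n - s) (S (m + D n))) (\<lambda>m. (norm m)\<^sup>2)
        = measure_pmf.expectation (S (m + D n)) (\<lambda>y. (norm (y - (m + D n)))\<^sup>2)"
      by (simp add: norm_minus_commute)
    also have "\<dots> \<le> (1 - \<delta>) * (norm (m + D n))\<^sup>2"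
      by (rule contr)
    also have "\<dots> \<le> (1 - \<delta>) * ((1 + e) * (norm m)\<^sup>2 + (1 + 1 / e) * (norm (D n))\<^sup>2)"
      using assms(3) norm_add_power2_le[OF \<open>0 < e\<close>] by (intro mult_left_mono) auto
    finally show ?thesis
      by (simp add: algebra_simps)
  qed
  have "measure_pmf.expectation (ef_memory S D (Suc n)) (\<lambda>m. (norm m)\<^sup>2)
      = measure_pmf.expectation ?p
          (\<lambda>m. measure_pmf.expectation (map_pmf (\<lambda>s. m + D n - s) (S (m + D n))) (\<lambda>m. (norm m)\<^sup>2))"
    using finite_p finite_S by (simp add: expectation_bind_pmf_finite)
  also have "\<dots> \<le> measure_pmf.expectation ?p
      (\<lambda>m. (1 - \<delta>) * (1 + e) * (norm m)\<^sup>2 + (1 - \<delta>) * (1 + 1 / e) * (norm (D n))\<^sup>2)"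
    using finite_p by (intro integral_mono inner integrable_measure_pmf_finite)
  also have "\<dots> = (1 - \<delta>) * (1 + e) * measure_pmf.expectation ?p (\<lambda>m. (norm m)\<^sup>2)
      + (1 - \<delta>) * (1 + 1 / e) * (norm (D n))\<^sup>2"
    using finite_p by (simp add: integrable_measure_pmf_finite)
  finally show ?thesis .
qed

lemma linear_recursion_le_invariant:
  fixes x :: "nat \<Rightarrow> real"
  assumes "x 0 \<le> c" and "\<And>n. n < N \<Longrightarrow> x (Suc n) \<le> a * x n + b"
    and "0 \<le> a" and "a * c + b \<le> c"
  shows "x N \<le> c"
  using assms(2)
proof (induction N)
  case 0
  show ?case using assms(1) .
next
  case (Suc N)
  then have "x (Suc N) \<le> a * x N + b" and "x N \<le> c"
    by simp_all
  then show ?case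
    using assms(3,4) mult_left_mono[of "x N" c a] by linarith
qed

lemma ef_memory_expectation_bound:
  fixes S :: "real^'n::finite \<Rightarrow> (real^'n) pmf"
  assumes finite_S: "\<And>x. finite (set_pmf (S x))"
    and contr: "\<And>x. measure_pmf.expectation (S x) (\<lambda>y. (norm (y - x))\<^sup>2) \<le> (1 - \<delta>) * (norm x)\<^sup>2"
    and \<delta>: "0 < \<delta>" "\<delta> < 1"
    and D_bound: "\<And>i. i < N \<Longrightarrow> (norm (D i))\<^sup>2 \<le> M" and "0 \<le> M"
  shows "measure_pmf.expectation (ef_memory S D N) (\<lambda>m. (norm m)\<^sup>2)
       \<le> 2 * (1 - \<delta>) * (2 - \<delta>) / \<delta>\<^sup>2 * M"
proof -
  let ?E = "\<lambda>n. measure_pmf.expectation (ef_memory S D n) (\<lambda>m. (norm m)\<^sup>2)"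
  define e where "e = \<delta> / (2 * (1 - \<delta>))"
  have "0 < e"
    using \<delta> by (simp add: e_def)
  moreover have "(1 - \<delta>) * (1 + e) = 1 - \<delta> / 2" and "(1 - \<delta>) * (1 + 1 / e) = (1 - \<delta>) * (2 - \<delta>) / \<delta>"
    using \<delta> by (simp_all add: e_def field_simps)
  ultimately have step: "?E (Suc n) \<le> (1 - \<delta> / 2) * ?E n + (1 - \<delta>) * (2 - \<delta>) / \<delta> * (norm (D n))\<^sup>2" for n
    using ef_memory_expectation_step[OF finite_S contr, of e D n] \<delta> by simp
  show ?thesis
  proof (rule linear_recursion_le_invariant[where x = ?E])
    show "?E (Suc n) \<le> (1 - \<delta> / 2) * ?E n + (1 - \<delta>) * (2 - \<delta>) / \<delta> * M" if "n < N" for n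
    proof -
      have "(1 - \<delta>) * (2 - \<delta>) / \<delta> * (norm (D n))\<^sup>2 \<le> (1 - \<delta>) * (2 - \<delta>) / \<delta> * M"
        using D_bound[OF that] \<delta> by (intro mult_left_mono) auto
      then show ?thesis
        using step[of n] by linarith
    qed
    show "(1 - \<delta> / 2) * (2 * (1 - \<delta>) * (2 - \<delta>) / \<delta>\<^sup>2 * M) + (1 - \<delta>) * (2 - \<delta>) / \<delta> * M
        \<le> 2 * (1 - \<delta>) * (2 - \<delta>) / \<delta>\<^sup>2 * M"
      using \<delta> by (simp add: power2_eq_square field_simps)
  qed (use \<delta> \<open>0 \<le> M\<close> in simp_all)
qed

theorem corollary1:
  fixes S :: "real^('r::finite \<times> ('d::finite + 'l::finite)) \<Rightarrow> (real^('r \<times> ('d + 'l))) pmf"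
    and DB :: "nat \<Rightarrow> real^'r^'d"
    and DA :: "nat \<Rightarrow> real^'l^'r"
    and u :: nat and Ok :: real and t :: nat
  assumes u_pos: "0 < u"
    and u_lt: "u < CARD('r \<times> ('d + 'l))"
    and O_def: "Ok = real u / real CARD('r \<times> ('d + 'l))"
    and S_sparse: "\<And>x y. y \<in> set_pmf (S x) \<Longrightarrow> keeps_entries u x y"
    and S_contr: "\<And>x. measure_pmf.expectation (S x) (\<lambda>y. (norm (y - x))\<^sup>2)
                    \<le> (1 - real u / real CARD('r \<times> ('d + 'l))) * (norm x)\<^sup>2"
  shows "measure_pmf.expectation
           (ef_memory S (\<lambda>i. concat_lora (DB i) (DA i)) (Suc t))
           (\<lambda>m. norm (factor_B m ** factor_A m))
         \<le> 2 * (1 - Ok) / Ok\<^sup>2 *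
           Max ((\<lambda>i. (norm (concat_lora (DB i) (DA i)))\<^sup>2) ` {0..t})"
proof -
  define D where "D = (\<lambda>i. concat_lora (DB i) (DA i))"
  define M where "M = Max ((\<lambda>i. (norm (D i))\<^sup>2) ` {0..t})"
  define p where "p = ef_memory S D (Suc t)"
  have "real u < real CARD('r \<times> ('d + 'l))"
    using u_lt by (simp only: of_nat_less_iff)
  then have Ok: "0 < Ok" "Ok < 1"
    using u_pos by (simp_all add: O_def)
  have finite_S: "finite (set_pmf (S x))" for x
    using S_sparse by (rule finite_set_pmf_keeps_entries)
  have D_bound: "(norm (D i))\<^sup>2 \<le> M" if "i < Suc t" for i
    unfolding M_def using that by (intro Max_ge) auto
  have "0 \<le> M"
    using D_bound[of 0] by (meson order_trans zero_le_power2 zero_less_Suc)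
  have finite_p: "finite (set_pmf p)"
    unfolding p_def using finite_S by (rule finite_set_pmf_ef_memory)
  have "measure_pmf.expectation p (\<lambda>m. norm (factor_B m ** factor_A m))
      \<le> measure_pmf.expectation p (\<lambda>m. (norm m)\<^sup>2 / 2)"
    using finite_p by (intro integral_mono integrable_measure_pmf_finite norm_factor_product_le)
  also have "\<dots> = measure_pmf.expectation p (\<lambda>m. (norm m)\<^sup>2) / 2"
    by simp
  also have "\<dots> \<le> 2 * (1 - Ok) * (2 - Ok) / Ok\<^sup>2 * M / 2"
    unfolding p_def
    by (intro divide_right_mono ef_memory_expectation_bound[OF finite_S S_contr[folded O_def] Ok D_bound \<open>0 \<le> M\<close>]) simp_all
  also have "\<dots> = (1 - Ok) * (2 - Ok) * (M / Ok\<^sup>2)"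
    using Ok by (simp add: field_simps)
  also have "\<dots> \<le> (1 - Ok) * 2 * (M / Ok\<^sup>2)"
    using Ok \<open>0 \<le> M\<close> by (intro mult_right_mono mult_left_mono) auto
  also have "\<dots> = 2 * (1 - Ok) / Ok\<^sup>2 * M"
    by simp
  finally show ?thesis
    by (simp add: p_def D_def M_def)
qed

end
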